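(* Let $T$ be a finite tree and let $P=p_0p_1\dots p_k$ ($k\ge1$) be a path in $T$ such that each of $p_1,\dots,p_{k-1}$ has degree $2$ in $T$. Let $B$ be the vertex set of the component containing $p_k$ of the graph obtained from $T$ by deleting the edges of $P$. Let $T'$ be the tree obtained from $T$ by deleting all edges between $p_k$ and $\Gamma(p_k)\setminus\{p_{k-1}\}$ and adding the edges between $p_0$ and $\Gamma(p_k)\setminus\{p_{k-1}\}$ instead. If $k$ is even, then for every $\ell\ge1$, \[\omega_{\ell}(p_0,T[B\cup P])-\omega_{\ell}(p_0,P)\leq \omega_{\ell}(p_0,T'[B\cup P])-\omega_{\ell}(p_0,P).\]
   Context: $\Gamma(v)$ is the set of neighbours of $v$ in $T$. For a graph $G$ containing the vertices of $B$ and $P$, $G[B\cup P]$ is the subgraph of $G$ induced by $B\cup\{p_0,\dots,p_k\}$. For a graph $G$, a vertex $x$ and $\ell\ge1$, $\omega_\ell(x,G)$ is the number of walks of length $\ell$ in $G$ starting at $x$. $P$ is regarded as a graph (the path). *)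

theory Defs
  imports Main
begin

definition simple_graph :: "'a set \<Rightarrow> 'a set set \<Rightarrow> bool" where
  "simple_graph V E \<longleftrightarrow> finite V \<and> (\<forall>e\<in>E. \<exists>u v. e = {u, v} \<and> u \<noteq> v \<and> u \<in> V \<and> v \<in> V)"

definition adj :: "'a set set \<Rightarrow> 'a \<Rightarrow> 'a \<Rightarrow> bool" where
  "adj E u v \<longleftrightarrow> u \<noteq> v \<and> {u, v} \<in> E"

definition nbrs :: "'a set set \<Rightarrow> 'a \<Rightarrow> 'a set" where
  "nbrs E v = {u. adj E v u}"

definition degree :: "'a set set \<Rightarrow> 'a \<Rightarrow> nat" where
  "degree E v = card (nbrs E v)"

definition connected_graph :: "'a set \<Rightarrow> 'a set set \<Rightarrow> bool" where
  "connected_graph V E \<longleftrightarrow> (\<forall>u\<in>V. \<forall>v\<in>V. (adj E)\<^sup>*\<^sup>* u v)"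

definition is_cycle :: "'a set set \<Rightarrow> 'a list \<Rightarrow> bool" where
  "is_cycle E cs \<longleftrightarrow> length cs \<ge> 3 \<and> distinct cs \<and>
     (\<forall>i. Suc i < length cs \<longrightarrow> adj E (cs ! i) (cs ! Suc i)) \<and> adj E (last cs) (hd cs)"

definition is_tree :: "'a set \<Rightarrow> 'a set set \<Rightarrow> bool" where
  "is_tree V E \<longleftrightarrow> simple_graph V E \<and> V \<noteq> {} \<and> connected_graph V E \<and> \<not> (\<exists>cs. is_cycle E cs)"

definition is_path :: "'a set set \<Rightarrow> 'a list \<Rightarrow> bool" where
  "is_path E ps \<longleftrightarrow> ps \<noteq> [] \<and> distinct ps \<and> (\<forall>i. Suc i < length ps \<longrightarrow> adj E (ps ! i) (ps ! Suc i))"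

definition path_edges :: "'a list \<Rightarrow> 'a set set" where
  "path_edges ps = {{ps ! i, ps ! Suc i} | i. Suc i < length ps}"

definition induced_edges :: "'a set set \<Rightarrow> 'a set \<Rightarrow> 'a set set" where
  "induced_edges E S = {e \<in> E. e \<subseteq> S}"

definition component :: "'a set \<Rightarrow> 'a set set \<Rightarrow> 'a \<Rightarrow> 'a set" where
  "component V E v = {u \<in> V. (adj E)\<^sup>*\<^sup>* v u}"

definition walks :: "'a set set \<Rightarrow> 'a \<Rightarrow> nat \<Rightarrow> 'a list set" where
  "walks E x l = {ws. length ws = Suc l \<and> hd ws = x \<and> (\<forall>i<l. adj E (ws ! i) (ws ! Suc i))}"

definition num_walks :: "nat \<Rightarrow> 'a \<Rightarrow> 'a set set \<Rightarrow> nat" where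
  "num_walks l x E = card (walks E x l)"

end

theory Submission
  imports Defs
begin

text \<open>Both sides contain the same term \<open>\<omega>\<^sub>l(p\<^sub>0, P)\<close>, so it suffices to inject the walks
  from \<open>p\<^sub>0\<close> in \<open>T[B \<union> P]\<close> into those in \<open>T'[B \<union> P]\<close>. Let \<open>m = k/2\<close> and let \<open>\<sigma>\<close> be the
  reflection \<open>p\<^sub>i \<mapsto> p\<^sub>k\<^sub>-\<^sub>i\<close> of the path, fixing all other vertices; it maps edges of
  \<open>T[B \<union> P]\<close> to edges of \<open>T'[B \<union> P]\<close>, because the edges from \<open>p\<^sub>k\<close> into \<open>B\<close> have become
  edges from \<open>p\<^sub>0\<close> into \<open>B\<close>. Until a walk from \<open>p\<^sub>0\<close> first visits the midpoint \<open>p\<^sub>m\<close> it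
  stays on \<open>p\<^sub>0 \<dots> p\<^sub>m\<^sub>-\<^sub>1\<close>: the inner path vertices have degree 2 and, as \<open>T\<close> is acyclic,
  \<open>p\<^sub>0\<close> has no neighbour in \<open>B\<close>. These steps exist in \<open>T'\<close> as well, so applying \<open>\<sigma>\<close> to
  each walk from its first visit of \<open>p\<^sub>m\<close> on is an involution mapping the first set of
  walks into the second.\<close>

lemma adj_sym: "adj E x y \<Longrightarrow> adj E y x"
  by (auto simp: adj_def insert_commute)

lemma adj_induced_iff: "adj (induced_edges F S) x y \<longleftrightarrow> adj F x y \<and> x \<in> S \<and> y \<in> S"
  by (auto simp: adj_def induced_edges_def)

lemma walks_conv_successively:
  "walks E x l = {ws. length ws = Suc l \<and> hd ws = x \<and> successively (adj E) ws}"
  by (auto simp: walks_def successively_conv_nth)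

lemma set_tl_subset_if_successively_induced:
  "successively (adj (induced_edges F S)) ws \<Longrightarrow> set (tl ws) \<subseteq> S"
  by (induction "adj (induced_edges F S)" ws rule: successively.induct) (auto simp: adj_induced_iff)

lemma finite_walks_induced:
  assumes "finite S"
  shows "finite (walks (induced_edges F S) x l)"
proof (rule finite_subset)
  show "walks (induced_edges F S) x l \<subseteq> {ws. set ws \<subseteq> insert x S \<and> length ws = Suc l}"
  proof
    fix ws assume "ws \<in> walks (induced_edges F S) x l"
    then have "length ws = Suc l" "hd ws = x" "set (tl ws) \<subseteq> S"
      using set_tl_subset_if_successively_induced by (auto simp: walks_conv_successively)
    then show "ws \<in> {ws. set ws \<subseteq> insert x S \<and> length ws = Suc l}"
      by (cases ws) auto
  qed
  show "finite {ws. set ws \<subseteq> insert x S \<and> length ws = Suc l}"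
    using assms by (simp add: finite_lists_length_eq)
qed

definition apply_from_first :: "'a \<Rightarrow> ('a \<Rightarrow> 'a) \<Rightarrow> 'a list \<Rightarrow> 'a list" where
  "apply_from_first c \<sigma> w = takeWhile (\<lambda>v. v \<noteq> c) w @ map \<sigma> (dropWhile (\<lambda>v. v \<noteq> c) w)"

lemma apply_from_first_involution:
  assumes "\<sigma> c = c" and "\<And>v. \<sigma> (\<sigma> v) = v"
  shows "apply_from_first c \<sigma> (apply_from_first c \<sigma> w) = w"
proof (cases "dropWhile (\<lambda>v. v \<noteq> c) w")
  case Nil
  then have "apply_from_first c \<sigma> w = w"
    by (metis append_Nil2 apply_from_first_def list.map(1) takeWhile_dropWhile_id)
  then show ?thesis by simp
next
  case (Cons d ds)
  then have "d = c" using hd_dropWhile[of "\<lambda>v. v \<noteq> c" w] by auto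
  moreover have "\<forall>v \<in> set (takeWhile (\<lambda>v. v \<noteq> c) w). v \<noteq> c"
    by (auto dest: set_takeWhileD)
  ultimately show ?thesis
    using Cons assms takeWhile_dropWhile_id[of "\<lambda>v. v \<noteq> c" w]
    by (simp add: apply_from_first_def takeWhile_append2 dropWhile_append2 comp_def)
qed

lemma set_takeWhile_walk_subset:
  assumes "successively R w" and "\<And>u v. u \<in> A \<Longrightarrow> R u v \<Longrightarrow> v \<in> insert c A"
    and "w \<noteq> []" and "hd w \<in> insert c A"
  shows "set (takeWhile (\<lambda>v. v \<noteq> c) w) \<subseteq> A"
  using assms(1,3,4)
proof (induction w)
  case (Cons a w)
  show ?case
  proof (cases "a = c \<or> w = []")
    case False
    then have "a \<in> A" "R a (hd w)" "successively R w"
      using Cons.prems by (auto simp: successively_Cons)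
    then show ?thesis using Cons.IH False assms(2) by auto
  qed (use Cons.prems in auto)
qed simp

lemma apply_from_first_walk:
  assumes hom: "\<And>u v. adj G u v \<Longrightarrow> adj G' (\<sigma> u) (\<sigma> v)" and fix_c: "\<sigma> c = c"
    and stay: "\<And>u v. u \<in> A \<Longrightarrow> adj G u v \<Longrightarrow> adj G' u v \<and> v \<in> insert c A"
    and x: "x \<in> insert c A" and w: "w \<in> walks G x l"
  shows "apply_from_first c \<sigma> w \<in> walks G' x l"
proof -
  define t where "t = takeWhile (\<lambda>v. v \<noteq> c) w"
  define d where "d = dropWhile (\<lambda>v. v \<noteq> c) w"
  have w_td: "w = t @ d" by (simp add: t_def d_def)
  have len: "length w = Suc l" and hd_w: "hd w = x" and walk: "successively (adj G) w"
    using w by (auto simp: walks_conv_successively)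
  have walk_t: "successively (adj G) t" and walk_d: "successively (adj G) d"
    and link: "t \<noteq> [] \<Longrightarrow> d \<noteq> [] \<Longrightarrow> adj G (last t) (hd d)"
    using walk unfolding w_td successively_append_iff by simp_all
  have "w \<noteq> []" using len by auto
  have t_A: "set t \<subseteq> A"
    unfolding t_def
    by (rule set_takeWhile_walk_subset[OF walk _ \<open>w \<noteq> []\<close>]) (use stay x hd_w in auto)
  have hd_d: "hd d = c" if "d \<noteq> []"
    using that hd_dropWhile[of "\<lambda>v. v \<noteq> c" w] unfolding d_def by blast
  have "successively (adj G') t"
    using walk_t by (rule successively_mono) (use t_A stay in blast)
  moreover have "successively (adj G') (map \<sigma> d)"
    unfolding successively_map using walk_d by (rule successively_mono) (rule hom)
  moreover have "adj G' (last t) (hd (map \<sigma> d))" if "t \<noteq> []" "d \<noteq> []"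
    using link[OF that] that t_A stay[of "last t" "hd d"] hd_d fix_c last_in_set
    by (simp add: hd_map subset_iff)
  moreover have "hd (t @ map \<sigma> d) = x"
    using hd_w hd_d fix_c \<open>w \<noteq> []\<close> unfolding w_td by (cases t; cases d) auto
  moreover have "length (t @ map \<sigma> d) = Suc l"
    using len unfolding w_td by simp
  moreover have "apply_from_first c \<sigma> w = t @ map \<sigma> d"
    by (simp add: apply_from_first_def t_def d_def)
  ultimately show ?thesis
    by (auto simp: walks_conv_successively successively_append_iff)
qed

lemma card_walks_le_if_switching:
  assumes "\<And>v. \<sigma> (\<sigma> v) = v" and "\<sigma> c = c"
    and "\<And>u v. adj G u v \<Longrightarrow> adj G' (\<sigma> u) (\<sigma> v)"
    and "\<And>u v. u \<in> A \<Longrightarrow> adj G u v \<Longrightarrow> adj G' u v \<and> v \<in> insert c A"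
    and "x \<in> insert c A" and "finite (walks G' x l)"
  shows "card (walks G x l) \<le> card (walks G' x l)"
proof (rule card_inj_on_le)
  show "inj_on (apply_from_first c \<sigma>) (walks G x l)"
    by (metis inj_onI apply_from_first_involution assms(1,2))
  show "apply_from_first c \<sigma> ` walks G x l \<subseteq> walks G' x l"
    using apply_from_first_walk[of G G' \<sigma> c A x] assms(2-5) by blast
qed (fact assms(6))

definition reflect :: "'a list \<Rightarrow> 'a \<Rightarrow> 'a" where
  "reflect ps v = (case map_of (zip ps (rev ps)) v of None \<Rightarrow> v | Some u \<Rightarrow> u)"

lemma reflect_nth:
  assumes "distinct ps" and "i < length ps"
  shows "reflect ps (ps ! i) = ps ! (length ps - Suc i)"
  using map_of_zip_nth[of ps "rev ps" i] assms by (simp add: reflect_def rev_nth)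

lemma reflect_notin:
  assumes "v \<notin> set ps"
  shows "reflect ps v = v"
proof -
  have "map_of (zip ps (rev ps)) v = None"
    using assms map_of_zip_is_None[of ps "rev ps" v] by simp
  then show ?thesis unfolding reflect_def by (simp del: map_of_zip_is_None)
qed

lemma reflect_reflect:
  assumes "distinct ps"
  shows "reflect ps (reflect ps v) = v"
proof (cases "v \<in> set ps")
  case True
  then obtain i where "i < length ps" "v = ps ! i" by (auto simp: in_set_conv_nth)
  then show ?thesis using assms by (simp add: reflect_nth)
qed (simp add: reflect_notin)

lemma reflect_mem_iff:
  assumes "distinct ps"
  shows "reflect ps v \<in> set ps \<longleftrightarrow> v \<in> set ps"
proof (cases "v \<in> set ps")
  case True
  then obtain i where "i < length ps" "v = ps ! i" by (auto simp: in_set_conv_nth)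
  then show ?thesis using assms by (simp add: reflect_nth)
qed (simp add: reflect_notin)

lemma path_edges_subset: "e \<in> path_edges ps \<Longrightarrow> e \<subseteq> set ps"
  by (auto simp: path_edges_def)

lemma nth_doubleton_in_path_edges_iff:
  assumes "distinct ps" and "i < length ps" and "j < length ps"
  shows "{ps ! i, ps ! j} \<in> path_edges ps \<longleftrightarrow> j = Suc i \<or> i = Suc j"
proof
  assume "{ps ! i, ps ! j} \<in> path_edges ps"
  then obtain a where "{ps ! i, ps ! j} = {ps ! a, ps ! Suc a}" "Suc a < length ps"
    by (auto simp: path_edges_def)
  then show "j = Suc i \<or> i = Suc j"
    using assms by (auto simp: doubleton_eq_iff nth_eq_iff_index_eq)
next
  assume "j = Suc i \<or> i = Suc j"
  then show "{ps ! i, ps ! j} \<in> path_edges ps"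
    using assms by (auto simp: path_edges_def insert_commute)
qed

lemma rtranclp_imp_distinct_successively:
  "R\<^sup>*\<^sup>* a b \<Longrightarrow> \<exists>xs. hd xs = a \<and> last xs = b \<and> xs \<noteq> [] \<and> distinct xs \<and> successively R xs"
proof (induction rule: converse_rtranclp_induct)
  case base
  show ?case by (intro exI[of _ "[b]"]) auto
next
  case (step a c)
  then obtain xs where xs: "hd xs = c" "last xs = b" "xs \<noteq> []" "distinct xs" "successively R xs"
    by blast
  show ?case
  proof (cases "a \<in> set xs")
    case True
    then obtain ys zs where "xs = ys @ a # zs" by (meson split_list)
    then show ?thesis
      using xs by (intro exI[of _ "a # zs"]) (auto simp: successively_append_iff)
  next
    case False
    then show ?thesis
      using xs step(1) by (intro exI[of _ "a # xs"]) (auto simp: successively_Cons)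
  qed
qed

lemma successively_Cons_imp_predecessor:
  "successively R (a # zs) \<Longrightarrow> v \<in> set zs \<Longrightarrow> \<exists>u. R u v"
  by (induction zs arbitrary: a) (auto simp: successively_Cons)

lemma is_cycle_append_detour:
  assumes path: "is_path E ps" and "length ps \<ge> 3"
    and detour: "successively (adj E) (last ps # qs @ [hd ps])"
    and "distinct qs" and "set qs \<inter> set ps = {}"
  shows "is_cycle E (ps @ qs)"
proof -
  have "ps \<noteq> []" "distinct ps" "successively (adj E) ps"
    using path by (auto simp: is_path_def successively_conv_nth)
  moreover have "successively (adj E) (last ps # qs)" "adj E (last (last ps # qs)) (hd ps)"
    using detour successively_append_iff[of _ "last ps # qs" "[hd ps]"] by auto
  ultimately have "successively (adj E) (ps @ qs)" and "adj E (last (ps @ qs)) (hd (ps @ qs))"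
    by (cases qs; auto simp: successively_append_iff successively_Cons)+
  then show ?thesis
    using assms \<open>distinct ps\<close> unfolding is_cycle_def successively_conv_nth[symmetric] by auto
qed

locale path_with_inner_degree_two =
  fixes V :: "'a set" and E :: "'a set set" and ps :: "'a list" and k :: nat
  assumes simple: "simple_graph V E" and acyclic: "\<nexists>cs. is_cycle E cs"
    and path: "is_path E ps" and len: "length ps = Suc k" and k2: "2 \<le> k"
    and deg2: "\<forall>i. 1 \<le> i \<and> i \<le> k - 1 \<longrightarrow> degree E (ps ! i) = 2"
begin

lemma distinct_ps: "distinct ps"
  using path by (simp add: is_path_def)

lemma nth_eq_iff: "i \<le> k \<Longrightarrow> j \<le> k \<Longrightarrow> ps ! i = ps ! j \<longleftrightarrow> i = j"
  using distinct_ps len by (simp add: nth_eq_iff_index_eq)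

lemma adj_Suc: "i < k \<Longrightarrow> adj E (ps ! i) (ps ! Suc i)"
  using path len by (simp add: is_path_def)

lemma hd_ps: "hd ps = ps ! 0"
  using len by (cases ps) auto

lemma last_ps: "last ps = ps ! k"
  using len by (cases ps rule: rev_cases) auto

lemma in_set_ps_conv_nth: "v \<in> set ps \<longleftrightarrow> (\<exists>i\<le>k. v = ps ! i)"
  using len by (auto simp: in_set_conv_nth less_Suc_eq_le)

lemma nbrs_inner:
  assumes "0 < i" "i < k"
  shows "nbrs E (ps ! i) = {ps ! (i - 1), ps ! Suc i}"
proof (rule card_subset_eq[symmetric])
  have "nbrs E (ps ! i) \<subseteq> V"
    using simple by (fastforce simp: nbrs_def adj_def simple_graph_def doubleton_eq_iff)
  then show "finite (nbrs E (ps ! i))"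
    using simple by (auto simp: simple_graph_def intro: finite_subset)
  show "{ps ! (i - 1), ps ! Suc i} \<subseteq> nbrs E (ps ! i)"
    using adj_Suc[of "i - 1"] adj_Suc[of i] assms by (auto simp: nbrs_def intro: adj_sym)
  have "ps ! (i - 1) \<noteq> ps ! Suc i"
    using nth_eq_iff[of "i - 1" "Suc i"] assms by simp
  then show "card {ps ! (i - 1), ps ! Suc i} = card (nbrs E (ps ! i))"
    using deg2 assms by (simp add: degree_def)
qed

lemma inner_isolated:
  assumes "0 < i" "i < k"
  shows "\<not> adj (E - path_edges ps) (ps ! i) y"
proof
  assume a: "adj (E - path_edges ps) (ps ! i) y"
  then have "y \<in> nbrs E (ps ! i)" by (auto simp: adj_def nbrs_def)
  then obtain j where "j = i - 1 \<or> j = Suc i" "y = ps ! j"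
    using nbrs_inner assms by auto
  moreover have "{ps ! i, ps ! j} \<in> path_edges ps" if "j = i - 1 \<or> j = Suc i" for j
    using that assms len distinct_ps nth_doubleton_in_path_edges_iff[of ps i j] by auto
  ultimately show False using a by (auto simp: adj_def)
qed

text \<open>Deleting the path edges separates the two ends of the path: a connection
  avoiding them could not pass through the isolated inner vertices and would close a cycle
  with the path.\<close>
lemma ends_disconnected: "\<not> (adj (E - path_edges ps))\<^sup>*\<^sup>* (ps ! k) (ps ! 0)"
proof
  let ?R = "adj (E - path_edges ps)"
  assume "?R\<^sup>*\<^sup>* (ps ! k) (ps ! 0)"
  then obtain ys where ys: "hd ys = ps ! k" "last ys = ps ! 0" "ys \<noteq> []" "distinct ys"
    "successively ?R ys"
    using rtranclp_imp_distinct_successively by metis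
  have "ps ! k \<noteq> ps ! 0" using nth_eq_iff[of k 0] k2 by simp
  obtain ys' where ys': "ys = ys' @ [ps ! 0]"
    using ys(2,3) by (metis append_butlast_last_id)
  with ys(1) \<open>ps ! k \<noteq> ps ! 0\<close> obtain qs where ys_qs: "ys = ps ! k # qs @ [ps ! 0]"
    by (cases ys') auto
  have walk_E: "successively (adj E) ys"
    using ys(5) by (rule successively_mono) (simp add: adj_def)
  have ends_notin: "ps ! 0 \<notin> set qs" "ps ! k \<notin> set qs"
    using ys(4) unfolding ys_qs by auto
  have "v \<notin> set ps" if "v \<in> set qs" for v
  proof
    assume "v \<in> set ps"
    then obtain i where i: "i \<le> k" "v = ps ! i" by (auto simp: in_set_ps_conv_nth)
    have "i \<noteq> 0" "i \<noteq> k" using ends_notin that i by metis+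
    moreover have "\<exists>u. ?R u v"
      using successively_Cons_imp_predecessor[of ?R "ps ! k" "qs @ [ps ! 0]" v] ys(5) that
      unfolding ys_qs by simp
    then obtain u where "?R u v" ..
    ultimately show False using inner_isolated[of i] adj_sym i by fastforce
  qed
  moreover have "successively (adj E) (last ps # qs @ [hd ps])"
    using walk_E unfolding ys_qs hd_ps last_ps .
  ultimately have "is_cycle E (ps @ qs)"
    using is_cycle_append_detour[OF path] ys(4) len k2 unfolding ys_qs by auto
  then show False using acyclic by blast
qed

lemma adj_nth_nth:
  assumes "i \<le> k" "j \<le> k" "adj E (ps ! i) (ps ! j)"
  shows "j = Suc i \<or> i = Suc j"
proof (rule ccontr)
  assume "\<not> (j = Suc i \<or> i = Suc j)"
  then have "{ps ! i, ps ! j} \<notin> path_edges ps"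
    using nth_doubleton_in_path_edges_iff[OF distinct_ps, of i j] assms(1,2) len by simp
  then have a: "adj (E - path_edges ps) (ps ! i) (ps ! j)"
    using assms(3) by (simp add: adj_def)
  have "i \<noteq> j" using assms(3) by (auto simp: adj_def)
  then consider "0 < i \<and> i < k" | "0 < j \<and> j < k" | "i = 0 \<and> j = k" | "i = k \<and> j = 0"
    using assms(1,2) by linarith
  then show False
  proof cases
    case 1
    then show False using inner_isolated a by blast
  next
    case 2
    then show False using inner_isolated adj_sym[OF a] by blast
  next
    case 3
    then show False using ends_disconnected adj_sym[OF a] by (metis r_into_rtranclp)
  next
    case 4
    then show False using ends_disconnected a by (metis r_into_rtranclp)
  qed
qed

lemma start_not_adj_component:
  assumes "y \<in> component V (E - path_edges ps) (ps ! k)" and "y \<notin> set ps"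
  shows "\<not> adj E (ps ! 0) y"
proof
  assume "adj E (ps ! 0) y"
  then have "adj (E - path_edges ps) y (ps ! 0)"
    using assms(2) path_edges_subset by (fastforce simp: adj_def insert_commute)
  moreover have "(adj (E - path_edges ps))\<^sup>*\<^sup>* (ps ! k) y"
    using assms(1) by (simp add: component_def)
  ultimately show False
    using ends_disconnected by (meson rtranclp.rtrancl_into_rtrancl)
qed

lemma adj_component_imp_end:
  assumes "i \<le> k" "adj E (ps ! i) y"
    and "y \<in> component V (E - path_edges ps) (ps ! k)" and "y \<notin> set ps"
  shows "i = k"
proof (rule ccontr)
  assume "i \<noteq> k"
  moreover have "i \<noteq> 0" using start_not_adj_component[OF assms(3,4)] assms(2) by metis
  ultimately have "y \<in> {ps ! (i - 1), ps ! Suc i}"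
    using nbrs_inner[of i] assms(1,2) by (auto simp: nbrs_def)
  then show False using assms(1,4) \<open>i \<noteq> k\<close> len by auto
qed

end

locale branch_transfer = path_with_inner_degree_two +
  fixes B :: "'a set" and N :: "'a set" and E' :: "'a set set"
  assumes B_def: "B = component V (E - path_edges ps) (ps ! k)"
    and N_def: "N = nbrs E (ps ! k) - {ps ! (k - 1)}"
    and E'_def: "E' = (E - {{ps ! k, u} | u. u \<in> N}) \<union> {{ps ! 0, u} | u. u \<in> N}"
    and k_even: "even k"
begin

lemma adj_E'_Suc:
  assumes "j < k"
  shows "adj E' (ps ! j) (ps ! Suc j)"
proof -
  have "{ps ! j, ps ! Suc j} \<notin> {{ps ! k, u} | u. u \<in> N}"
  proof
    assume "{ps ! j, ps ! Suc j} \<in> {{ps ! k, u} | u. u \<in> N}"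
    then obtain u where u: "{ps ! j, ps ! Suc j} = {ps ! k, u}" "u \<in> N" by blast
    have "ps ! j \<noteq> ps ! k" using nth_eq_iff[of j k] assms by simp
    then have "ps ! Suc j = ps ! k" and u_j: "u = ps ! j"
      using u(1) by (auto simp: doubleton_eq_iff)
    then have "k = Suc j" using nth_eq_iff[of "Suc j" k] assms by simp
    then show False using u(2) u_j by (simp add: N_def)
  qed
  then show ?thesis using adj_Suc[OF assms] by (auto simp: E'_def adj_def)
qed

lemma adj_E'_moved:
  assumes "y \<in> N"
  shows "adj E' (ps ! 0) y"
proof -
  have "adj E (ps ! k) y" using assms by (simp add: N_def nbrs_def)
  then have "y \<noteq> ps ! 0" using adj_nth_nth[of k 0] k2 by auto
  then show ?thesis using assms by (auto simp: E'_def adj_def)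
qed

lemma adj_E'_off_path:
  assumes "adj E x y" "x \<notin> set ps" "y \<notin> set ps"
  shows "adj E' x y"
proof -
  have "ps ! k \<in> set ps" using len by simp
  then have "{x, y} \<notin> {{ps ! k, u} | u. u \<in> N}" using assms(2,3) by auto
  then show ?thesis using assms(1) by (simp add: E'_def adj_def)
qed

lemma adj_along_path:
  assumes "j < k" "adj E (ps ! j) y" "y \<in> B \<union> set ps"
  shows "y = ps ! Suc j \<or> (0 < j \<and> y = ps ! (j - 1))"
proof (cases "y \<in> set ps")
  case True
  then obtain i where "i \<le> k" "y = ps ! i" by (auto simp: in_set_ps_conv_nth)
  then show ?thesis using adj_nth_nth[of j i] assms(1,2) by auto
next
  case False
  then show ?thesis using adj_component_imp_end[of j y] assms by (auto simp: B_def)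
qed

lemma reflect_adj_from_path:
  assumes "u \<in> set ps" "adj E u v" "v \<in> B \<union> set ps"
  shows "adj E' (reflect ps u) (reflect ps v)"
proof -
  obtain i where i: "i \<le> k" "u = ps ! i" using assms(1) by (auto simp: in_set_ps_conv_nth)
  have reflect_i: "reflect ps (ps ! i) = ps ! (k - i)" if "i \<le> k" for i
    using reflect_nth[OF distinct_ps, of i] that len by simp
  show ?thesis
  proof (cases "v \<in> set ps")
    case True
    then obtain j where j: "j \<le> k" "v = ps ! j" by (auto simp: in_set_ps_conv_nth)
    then consider "j = Suc i" | "i = Suc j" using adj_nth_nth[of i j] assms(2) i by auto
    then show ?thesis
    proof cases
      case 1
      then have "adj E' (ps ! (k - j)) (ps ! Suc (k - j))"
        using adj_E'_Suc[of "k - j"] j by simp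
      then show ?thesis using 1 i j reflect_i by (auto intro: adj_sym simp: Suc_diff_Suc)
    next
      case 2
      then have "adj E' (ps ! (k - i)) (ps ! Suc (k - i))"
        using adj_E'_Suc[of "k - i"] i by simp
      then show ?thesis using 2 i j reflect_i by (auto simp: Suc_diff_Suc)
    qed
  next
    case False
    then have "i = k" using adj_component_imp_end[of i v] assms i by (auto simp: B_def)
    moreover have "v \<noteq> ps ! (k - 1)" using False len by auto
    ultimately have "v \<in> N" using assms(2) i by (simp add: N_def nbrs_def)
    then show ?thesis
      using adj_E'_moved reflect_i[of k] reflect_notin[OF False] i \<open>i = k\<close> by simp
  qed
qed

lemma reflect_adj_induced:
  assumes "adj (induced_edges E (B \<union> set ps)) u v"
  shows "adj (induced_edges E' (B \<union> set ps)) (reflect ps u) (reflect ps v)"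
proof -
  have uv: "adj E u v" "u \<in> B \<union> set ps" "v \<in> B \<union> set ps"
    using assms by (auto simp: adj_induced_iff)
  have "adj E' (reflect ps u) (reflect ps v)"
  proof (cases "u \<in> set ps \<or> v \<in> set ps")
    case True
    then show ?thesis using reflect_adj_from_path uv adj_sym by metis
  next
    case False
    then show ?thesis
      using adj_E'_off_path[OF uv(1)] reflect_notin[of u ps] reflect_notin[of v ps] by simp
  qed
  moreover have "reflect ps w \<in> B \<union> set ps" if "w \<in> B \<union> set ps" for w
    using that reflect_mem_iff[OF distinct_ps] reflect_notin by (metis UnE UnI1 UnI2)
  ultimately show ?thesis using uv by (simp add: adj_induced_iff)
qed

lemma reflect_midpoint: "reflect ps (ps ! (k div 2)) = ps ! (k div 2)"
  using reflect_nth[OF distinct_ps, of "k div 2"] len k_even by auto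

lemma first_half_adj_induced:
  assumes "u \<in> set (take (k div 2) ps)" "adj (induced_edges E (B \<union> set ps)) u v"
  shows "adj (induced_edges E' (B \<union> set ps)) u v
    \<and> v \<in> insert (ps ! (k div 2)) (set (take (k div 2) ps))"
proof -
  have in_take: "ps ! i \<in> set (take (k div 2) ps)" if "i < k div 2" for i
    using that len by (force simp: in_set_conv_nth)
  obtain j where j: "j < k div 2" "u = ps ! j"
    using assms(1) len by (auto simp: in_set_conv_nth)
  have uv: "adj E u v" "u \<in> B \<union> set ps" "v \<in> B \<union> set ps"
    using assms(2) by (auto simp: adj_induced_iff)
  then consider "v = ps ! Suc j" | "0 < j" "v = ps ! (j - 1)"
    using adj_along_path[of j v] j by fastforce
  then show ?thesis
  proof cases
    case 1
    then have "v \<in> insert (ps ! (k div 2)) (set (take (k div 2) ps))"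
      using in_take[of "Suc j"] j by (cases "Suc j = k div 2") auto
    then show ?thesis
      using 1 adj_E'_Suc[of j] j uv by (auto simp: adj_induced_iff)
  next
    case 2
    then have "adj E' (ps ! (j - 1)) (ps ! j)" using adj_E'_Suc[of "j - 1"] j by simp
    then show ?thesis
      using 2 j uv in_take[of "j - 1"] by (auto simp: adj_induced_iff intro: adj_sym)
  qed
qed

end

theorem corollary3:
  fixes V :: "'a set" and E :: "'a set set" and ps :: "'a list" and k :: nat and l :: nat
  assumes tree: "is_tree V E"
    and path: "is_path E ps" and set_ps: "set ps \<subseteq> V"
    and len: "length ps = Suc k" and k1: "k \<ge> 1"
    and deg2: "\<forall>i. 1 \<le> i \<and> i \<le> k - 1 \<longrightarrow> degree E (ps ! i) = 2"
    and B_def: "B = component V (E - path_edges ps) (ps ! k)"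
    and N_def: "N = nbrs E (ps ! k) - {ps ! (k - 1)}"
    and E'_def: "E' = (E - {{ps ! k, u} | u. u \<in> N}) \<union> {{ps ! 0, u} | u. u \<in> N}"
    and keven: "even k"
    and l1: "l \<ge> 1"
  shows "int (num_walks l (ps ! 0) (induced_edges E (B \<union> set ps))) - int (num_walks l (ps ! 0) (path_edges ps))
         \<le> int (num_walks l (ps ! 0) (induced_edges E' (B \<union> set ps))) - int (num_walks l (ps ! 0) (path_edges ps))"
proof -
  have "2 \<le> k" using k1 keven by presburger
  then interpret branch_transfer V E ps k B N E'
    using tree path len deg2 B_def N_def E'_def keven by unfold_locales (auto simp: is_tree_def)
  have "finite (B \<union> set ps)"
    using tree by (auto simp: B_def component_def is_tree_def simple_graph_def)
  then have "finite (walks (induced_edges E' (B \<union> set ps)) (ps ! 0) l)"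
    by (rule finite_walks_induced)
  moreover have "ps ! 0 \<in> insert (ps ! (k div 2)) (set (take (k div 2) ps))"
    using \<open>2 \<le> k\<close> len by (force simp: in_set_conv_nth)
  ultimately have "card (walks (induced_edges E (B \<union> set ps)) (ps ! 0) l)
      \<le> card (walks (induced_edges E' (B \<union> set ps)) (ps ! 0) l)"
    using card_walks_le_if_switching[OF reflect_reflect[OF distinct_ps] reflect_midpoint
        reflect_adj_induced first_half_adj_induced]
    by blast
  then show ?thesis by (simp add: num_walks_def)
qed

end
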